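(* Let $I=(i_1\leq i_2\leq\cdots\leq i_r)$ with $r\geq3$ and suppose $I$ has a repeated entry, $i_s=i_{s+1}$ for some $s$. Let $\chi_I=\sum_\varepsilon a_I^\varepsilon w_I^\varepsilon$ with $a_I^\varepsilon\in\mathcal B$, the sum over binary $r$-tuples $\varepsilon=(\epsilon_1,\dots,\epsilon_r)$ with $1\leq\sum\epsilon_j\leq r-1$. If $\alpha(\chi_I)+\beta(\chi_I)=\gamma(\chi_I)+\delta(\chi_I)$, then $\chi_I=0$.
   Context: $\mathcal B$ is a graded commutative rational algebra and $W$ a graded rational vector space concentrated in odd degrees with basis $\{w_i\}$ indexed by a totally ordered set. In $\mathcal B\otimes\land W\otimes\land W$ write $w_i^0=w_i=1\otimes w_i\otimes1$ and $w_i^1=w'_i=1\otimes1\otimes w_i$, and $w_I^\varepsilon=w_{i_1}^{\epsilon_1}\cdots w_{i_r}^{\epsilon_r}$. In $\mathcal B\otimes\land W^{\otimes 3}$ write $w,w',w''$ for $w$ in the three copies. Algebra maps $\alpha,\beta,\gamma,\delta\colon\mathcal B\otimes\land W\otimes\land W\to\mathcal B\otimes\land W\otimes\land W\otimes\land W$, identity on $\mathcal B$, are given by $\alpha(w)=w,\alpha(w')=w'$; $\beta(w)=w+w',\beta(w')=w''$; $\gamma(w)=w,\gamma(w')=w'+w''$; $\delta(w)=w',\delta(w')=w''$. *)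

theory Defs
  imports Main "HOL-Library.Product_Lexorder"
begin

definition graded_comm_rat_algebra :: "(int \<Rightarrow> 'b::ring_1 set) \<Rightarrow> bool" where
  "graded_comm_rat_algebra B \<longleftrightarrow>
     (\<forall>n. 0 \<in> B n \<and> (\<forall>x\<in>B n. \<forall>y\<in>B n. x + y \<in> B n) \<and> (\<forall>x\<in>B n. - x \<in> B n)) \<and>
     (\<forall>x. \<exists>f. finite {n. f n \<noteq> 0} \<and> (\<forall>n. f n \<in> B n) \<and> x = (\<Sum>n\<in>{n. f n \<noteq> 0}. f n)) \<and>
     (\<forall>f. finite {n. f n \<noteq> 0} \<and> (\<forall>n. f n \<in> B n) \<and> (\<Sum>n\<in>{n. f n \<noteq> 0}. f n) = 0
            \<longrightarrow> (\<forall>n. f n = 0)) \<and>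
     (1 \<in> B 0) \<and>
     (\<forall>m n x y. x \<in> B m \<and> y \<in> B n \<longrightarrow> x * y \<in> B (m + n)) \<and>
     (\<forall>m n x y. x \<in> B m \<and> y \<in> B n \<longrightarrow>
                 x * y = (if even (m * n) then y * x else - (y * x))) \<and>
     (\<forall>k::nat. k > 0 \<longrightarrow> (\<exists>y::'b. of_nat k * y = 1))"

text \<open>Generators are pairs (c, i): copy number c (0 = w, 1 = w', 2 = w'') and
  basis index i.  An element of B \<otimes> \<and>(generators) is represented by its coefficient
  function on finite sets S of generators, S standing for the basis monomial
  e_S = product of the elements of S in increasing order.\<close>

definition inversions :: "'g::linorder list \<Rightarrow> nat" where
  "inversions xs = card {(i, j). i < j \<and> j < length xs \<and> xs ! j < xs ! i}"

text \<open>Coefficient of e_S in the product of the word xs of (odd) generators.\<close>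
definition mon :: "'g::linorder list \<Rightarrow> 'g set \<Rightarrow> int" where
  "mon xs S = (if distinct xs \<and> set xs = S then (-1) ^ inversions xs else 0)"

text \<open>Image of a word of generators under the algebra map sending each generator g
  to the sum of the generators in the list \<phi> g; coefficient of e_S.\<close>
definition ext_img :: "('g \<Rightarrow> 'h::linorder list) \<Rightarrow> 'g list \<Rightarrow> 'h set \<Rightarrow> int" where
  "ext_img \<phi> xs S = sum_list (map (\<lambda>c. mon c S) (product_lists (map \<phi> xs)))"

definition Eps :: "nat \<Rightarrow> nat list set" where
  "Eps r = {e. length e = r \<and> set e \<subseteq> {0, 1} \<and> 1 \<le> sum_list e \<and> sum_list e \<le> r - 1}"

definition wordI :: "nat list \<Rightarrow> 'i list \<Rightarrow> (nat \<times> 'i) list" where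
  "wordI e I = zip e I"

text \<open>chi_I = sum_e a_e w_I^e in B \<otimes> \<and>W \<otimes> \<and>W, coefficient at e_S.\<close>
definition chi :: "(nat list \<Rightarrow> 'b::ring_1) \<Rightarrow> 'i::linorder list \<Rightarrow> (nat \<times> 'i) set \<Rightarrow> 'b" where
  "chi a I S = (\<Sum>e\<in>Eps (length I). a e * of_int (mon (wordI e I) S))"

definition chi_img :: "((nat \<times> 'i) \<Rightarrow> (nat \<times> 'i) list) \<Rightarrow> (nat list \<Rightarrow> 'b::ring_1)
                        \<Rightarrow> 'i::linorder list \<Rightarrow> (nat \<times> 'i) set \<Rightarrow> 'b" where
  "chi_img \<phi> a I S = (\<Sum>e\<in>Eps (length I). a e * of_int (ext_img \<phi> (wordI e I) S))"

definition alpha_g :: "nat \<times> 'i \<Rightarrow> (nat \<times> 'i) list" where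
  "alpha_g g = (case g of (c, i) \<Rightarrow> if c = 0 then [(0, i)] else [(1, i)])"
definition beta_g :: "nat \<times> 'i \<Rightarrow> (nat \<times> 'i) list" where
  "beta_g g = (case g of (c, i) \<Rightarrow> if c = 0 then [(0, i), (1, i)] else [(2, i)])"
definition gamma_g :: "nat \<times> 'i \<Rightarrow> (nat \<times> 'i) list" where
  "gamma_g g = (case g of (c, i) \<Rightarrow> if c = 0 then [(0, i)] else [(1, i), (2, i)])"
definition delta_g :: "nat \<times> 'i \<Rightarrow> (nat \<times> 'i) list" where
  "delta_g g = (case g of (c, i) \<Rightarrow> if c = 0 then [(1, i)] else [(2, i)])"

end

theory Submission
  imports Defs
begin

(* Fix a basis monomial e_S of B \<otimes> \<and>W \<otimes> \<and>W; we show that the coefficient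
   chi_I(S) vanishes.  If it is nonzero, S is the support of some word w_I^e, so S is a set of
   r distinct generators; since i_s = i_{s+1} = i, S contains both w_i and w'_i, and since
   r \<ge> 3 it contains a third generator (c, j) with j \<noteq> i.  We then relabel S by an injective
   map \<rho> into a set T of generators of B \<otimes> \<and>W^{\<otimes>3} chosen so that, at the monomial e_T,
   three of the four images alpha, beta, gamma, delta of chi_I have zero coefficient while the
   fourth has coefficient \<plusminus>chi_I(S):
     - for c = 1 (S \<ni> w'_j) only gamma survives, T \<ni> w_i, w'_i, w''_j;
     - for c = 0 (S \<ni> w_j)  only beta survives,  T \<ni> w'_i, w''_i, w_j. *)


subsection \<open>Signs of words of odd generators\<close>

lemma inversions_Cons:
  "inversions (x # xs) = length (filter (\<lambda>y. y < x) xs) + inversions xs"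
proof -
  let ?n = "length xs"
  let ?A = "{(i, j). i < j \<and> j < length (x # xs) \<and> (x # xs) ! j < (x # xs) ! i}"
  let ?P = "(\<lambda>j. (0::nat, Suc j)) ` {j. j < ?n \<and> xs ! j < x}"
  let ?Q = "(\<lambda>(i, j). (Suc i, Suc j)) ` {(i, j). i < j \<and> j < ?n \<and> xs ! j < xs ! i}"
  have split: "?A = ?P \<union> ?Q"
  proof (rule set_eqI, clarify)
    fix i j
    show "((i, j) \<in> ?A) = ((i, j) \<in> ?P \<union> ?Q)"
      by (cases i; cases j) (auto simp: image_iff)
  qed
  have fin: "finite {(i, j). i < j \<and> j < ?n \<and> xs ! j < xs ! i}"
    by (rule finite_subset[of _ "{..<?n} \<times> {..<?n}"]) auto
  have "card ?A = card ?P + card ?Q"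
    unfolding split by (rule card_Un_disjoint) (use fin in auto)
  moreover have "card ?P = card {j. j < ?n \<and> xs ! j < x}"
    by (rule card_image) (auto simp: inj_on_def)
  moreover have "card ?Q = inversions xs"
    unfolding inversions_def by (rule card_image) (auto simp: inj_on_def)
  ultimately show ?thesis
    unfolding inversions_def[of "x # xs"] by (simp add: length_filter_conv_card)
qed

lemma inversions_swap_sign:
  fixes a b :: "'g::linorder"
  assumes "a \<noteq> b"
  shows "(-1::int) ^ inversions (u @ a # b # v) = - ((-1) ^ inversions (u @ b # a # v))"
proof (induction u)
  case Nil
  have "a < b \<or> b < a" using assms by auto
  then show ?case by (auto simp: inversions_Cons add_ac)
next
  case (Cons y u)
  have "length (filter (\<lambda>z. z < y) (u @ a # b # v)) = length (filter (\<lambda>z. z < y) (u @ b # a # v))"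
    by simp
  then show ?case using Cons by (simp add: inversions_Cons power_add)
qed

text \<open>Odd generators anticommute: the coefficient of a word is antisymmetric under an adjacent
  transposition (for equal letters both sides vanish, the word being non-distinct).\<close>
lemma mon_swap: "mon (u @ a # b # v) S = - mon (u @ b # a # v) S"
proof (cases "a = b")
  case True then show ?thesis by (simp add: mon_def)
next
  case False
  have "distinct (u @ a # b # v) = distinct (u @ b # a # v)"
    and "set (u @ a # b # v) = set (u @ b # a # v)" by auto
  then show ?thesis using inversions_swap_sign[OF False] by (simp add: mon_def)
qed

text \<open>The sign by which a relabelling f of the letters of a word changes its coefficient.\<close>
definition relabel_sign :: "('g::linorder \<Rightarrow> 'h::linorder) \<Rightarrow> 'g list \<Rightarrow> int" where
  "relabel_sign f L = (-1) ^ (inversions (map f L) + inversions L)"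

lemma relabel_sign_Cons:
  "relabel_sign f (x # L) =
     (-1) ^ (length (filter (\<lambda>y. f y < f x) L) + length (filter (\<lambda>y. y < x) L)) * relabel_sign f L"
  by (simp add: relabel_sign_def inversions_Cons filter_map o_def power_add add_ac)

lemma relabel_sign_square: "relabel_sign f L * relabel_sign f L = 1"
  unfolding relabel_sign_def by (simp flip: power_add)

text \<open>Relabelling signs are invariant under transpositions (both parities flip), hence
  under moving a letter past a block of letters.\<close>
lemma relabel_sign_swap:
  assumes "a \<noteq> b" "f a \<noteq> f b"
  shows "relabel_sign f (u @ a # b # v) = relabel_sign f (u @ b # a # v)"
  using inversions_swap_sign[OF assms(1), of u v] inversions_swap_sign[OF assms(2), of "map f u" "map f v"]
  by (simp add: relabel_sign_def power_add)

lemma relabel_sign_move: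
  assumes "distinct (u @ w @ x # v)" "inj_on f (set (u @ w @ x # v))"
  shows "relabel_sign f (u @ w @ x # v) = relabel_sign f (u @ x # w @ v)"
  using assms
proof (induction w arbitrary: u)
  case Nil then show ?case by simp
next
  case (Cons y w)
  have "relabel_sign f (u @ (y # w) @ x # v) = relabel_sign f ((u @ [y]) @ w @ x # v)"
    by simp
  also have "\<dots> = relabel_sign f ((u @ [y]) @ x # w @ v)"
    using Cons.prems by (intro Cons.IH) auto
  also have "\<dots> = relabel_sign f (u @ x # y # w @ v)"
    using Cons.prems by (simp add: relabel_sign_swap inj_on_def)
  finally show ?case by simp
qed

lemma relabel_sign_set:
  assumes "distinct L1" "distinct L2" "set L1 = set L2" "inj_on f (set L1)"
  shows "relabel_sign f L1 = relabel_sign f L2"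
  using assms
proof (induction L1 arbitrary: L2)
  case Nil then show ?case by simp
next
  case (Cons x L1)
  then have "x \<in> set L2" by auto
  then obtain w v where L2: "L2 = w @ x # v" by (meson split_list)
  have moved: "relabel_sign f L2 = relabel_sign f (x # w @ v)"
    using Cons.prems relabel_sign_move[of "[]" w x v f] by (simp add: L2)
  have rest: "distinct (w @ v)" "set L1 = set (w @ v)" using Cons.prems L2 by auto
  have "relabel_sign f L1 = relabel_sign f (w @ v)"
    using Cons.prems rest by (intro Cons.IH) (auto intro: inj_on_subset)
  moreover have "length (filter P L1) = length (filter P (w @ v))" for P
    using Cons.prems(1) rest by (metis distinct.simps(2) distinct_length_filter)
  ultimately show ?case using moved by (simp add: relabel_sign_Cons)
qed

lemma mon_relabel:
  assumes inj: "inj_on f D" and "S \<subseteq> D" "set L \<subseteq> D" "distinct L0" "set L0 = S"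
  shows "mon (map f L) (f ` S) = relabel_sign f L0 * mon L S"
proof (cases "distinct L \<and> set L = S")
  case True
  have "relabel_sign f L = relabel_sign f L0"
    using True assms by (intro relabel_sign_set) (auto intro: inj_on_subset)
  moreover have "distinct (map f L)"
    using True assms by (auto simp: distinct_map intro: inj_on_subset)
  moreover have "(-1::int) ^ inversions (map f L) = relabel_sign f L * (-1) ^ inversions L"
    unfolding relabel_sign_def by (simp add: power_add mult.assoc flip: power_add)
      (simp add: add.assoc power_add flip: mult_2)
  ultimately show ?thesis
    using True by (simp add: mon_def)
next
  case False
  have "mon (map f L) (f ` S) = 0"
    using False inj_on_image_eq_iff[OF inj \<open>set L \<subseteq> D\<close> \<open>S \<subseteq> D\<close>] inj_on_subset[OF inj \<open>set L \<subseteq> D\<close>]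
    by (auto simp: mon_def distinct_map)
  then show ?thesis using False by (auto simp: mon_def)
qed


subsection \<open>Coefficients of images of words\<close>

lemma choice_word_letters:
  assumes "c \<in> set (product_lists (map \<phi> xs))"
  shows "length c = length xs" "\<And>k. k < length xs \<Longrightarrow> c ! k \<in> set (\<phi> (xs ! k))"
  using assms by (auto simp: product_lists_set list_all2_conv_all_nth)

lemma ext_img_uncovered:
  assumes "t \<in> T" "\<And>g. t \<notin> set (\<phi> g)"
  shows "ext_img \<phi> xs T = 0"
proof -
  have "mon c T = 0" if "c \<in> set (product_lists (map \<phi> xs))" for c
  proof -
    have "t \<notin> set c" using assms(2) choice_word_letters[OF that] by (metis in_set_conv_nth)
    then show ?thesis using assms(1) by (auto simp: mon_def)
  qed
  then show ?thesis unfolding ext_img_def by (simp cong: map_cong)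
qed

lemma ext_img_letter_avoids:
  assumes "x \<in> set xs" "\<And>y. y \<in> set (\<phi> x) \<Longrightarrow> y \<notin> T"
  shows "ext_img \<phi> xs T = 0"
proof -
  obtain k where k: "k < length xs" "xs ! k = x" using assms(1) by (auto simp: in_set_conv_nth)
  have "mon c T = 0" if "c \<in> set (product_lists (map \<phi> xs))" for c
  proof -
    have "c ! k \<in> set (\<phi> x)" "c ! k \<in> set c"
      using choice_word_letters[OF that] k by auto
    then show ?thesis using assms(2) by (auto simp: mon_def)
  qed
  then show ?thesis unfolding ext_img_def by (simp cong: map_cong)
qed

lemma sum_product_lists_Cons:
  "sum_list (map h (product_lists (xs # xss))) =
     (\<Sum>x\<leftarrow>xs. sum_list (map (\<lambda>p. h (x # p)) (product_lists xss)))"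
  by (induction xs) (simp_all add: map_concat o_def)

lemma sum_list_swap_order:
  "(\<Sum>a\<leftarrow>xs. \<Sum>b\<leftarrow>ys. f a b) = (\<Sum>b\<leftarrow>ys. \<Sum>a\<leftarrow>xs. (f a b :: 'a::comm_monoid_add))"
  by (induction xs) (simp_all add: sum_list_addf)

lemma double_sum_antisym:
  assumes "\<And>a b. F a b = - F b a"
  shows "(\<Sum>a\<leftarrow>ys. \<Sum>b\<leftarrow>ys. F a b) = (0::int)"
proof -
  have "(\<Sum>a\<leftarrow>ys. \<Sum>b\<leftarrow>ys. F a b) = (\<Sum>b\<leftarrow>ys. \<Sum>a\<leftarrow>ys. - F b a)"
    by (subst sum_list_swap_order) (intro arg_cong[where f=sum_list] map_cong refl assms)
  also have "\<dots> = - (\<Sum>b\<leftarrow>ys. \<Sum>a\<leftarrow>ys. F b a)"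
    by (simp add: uminus_sum_list_map o_def)
  finally show ?thesis by simp
qed

text \<open>The image of a word with a repeated adjacent letter g g vanishes: the double sum over
  the choices for the two copies of g is antisymmetric.  We prove this for an arbitrary
  function h of choice words that is antisymmetric under adjacent transpositions.\<close>
lemma sum_product_lists_repeat:
  assumes "\<And>p a b q. h (p @ a # b # q) = - h (p @ b # a # q)"
  shows "sum_list (map h (product_lists (xss @ ys # ys # zss))) = (0::int)"
  using assms
proof (induction xss arbitrary: h)
  case Nil
  have "(\<Sum>a\<leftarrow>ys. \<Sum>b\<leftarrow>ys. sum_list (map (\<lambda>q. h (a # b # q)) (product_lists zss))) = 0"
  proof (rule double_sum_antisym)
    fix a b
    show "sum_list (map (\<lambda>q. h (a # b # q)) (product_lists zss)) =
          - sum_list (map (\<lambda>q. h (b # a # q)) (product_lists zss))"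
      unfolding uminus_sum_list_map o_def
      by (intro arg_cong[where f=sum_list] map_cong refl Nil[of "[]", simplified])
  qed
  then show ?case by (simp add: sum_product_lists_Cons del: product_lists.simps)
next
  case (Cons xs xss)
  have "sum_list (map (\<lambda>p. h (x # p)) (product_lists (xss @ ys # ys # zss))) = 0" for x
    by (rule Cons.IH) (rule Cons.prems[of "x # _", unfolded append_Cons])
  then show ?case by (simp add: sum_product_lists_Cons del: product_lists.simps)
qed

lemma ext_img_repeat: "ext_img \<phi> (u @ g # g # v) T = 0"
  unfolding ext_img_def map_append list.map
  by (rule sum_product_lists_repeat) (rule mon_swap)

text \<open>Letters whose image has exactly one summand in T.  When every letter is of this
  kind, the image of a word has, at e_T, only the contribution of the word relabelled by
  the selected summands.\<close>
definition selects :: "('g \<Rightarrow> 'h list) \<Rightarrow> ('g \<Rightarrow> 'h) \<Rightarrow> 'h set \<Rightarrow> 'g \<Rightarrow> bool" where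
  "selects \<phi> \<rho> T x \<longleftrightarrow>
     \<rho> x \<in> set (\<phi> x) \<and> distinct (\<phi> x) \<and> (\<forall>y\<in>set (\<phi> x). y \<in> T \<longrightarrow> y = \<rho> x)"

lemma ext_img_selects:
  assumes "\<And>x. x \<in> set xs \<Longrightarrow> selects \<phi> \<rho> T x"
  shows "ext_img \<phi> xs T = mon (map \<rho> xs) T"
proof -
  let ?L = "product_lists (map \<phi> xs)"
  have distinct: "distinct ?L" using assms by (intro distinct_product_lists) (auto simp: selects_def)
  have selected: "map \<rho> xs \<in> set ?L"
    using assms by (auto simp: product_lists_set list_all2_conv_all_nth selects_def)
  have others: "mon c T = 0" if c: "c \<in> set ?L" "c \<noteq> map \<rho> xs" for c
  proof -
    note letters = choice_word_letters[OF c(1)]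
    obtain k where k: "k < length xs" "c ! k \<noteq> \<rho> (xs ! k)"
      using c(2) letters(1) by (metis list_eq_iff_nth_eq length_map nth_map)
    have "selects \<phi> \<rho> T (xs ! k)" using assms k(1) by simp
    then have "c ! k \<notin> T" using letters(2)[OF k(1)] k(2) by (auto simp: selects_def)
    moreover have "c ! k \<in> set c" using k(1) letters(1) by simp
    ultimately show ?thesis by (auto simp: mon_def)
  qed
  have "ext_img \<phi> xs T = (\<Sum>c\<in>set ?L. mon c T)"
    unfolding ext_img_def by (simp add: sum_list_distinct_conv_sum_set distinct)
  also have "\<dots> = mon (map \<rho> xs) T"
    using others selected by (simp add: sum.remove)
  finally show ?thesis .
qed


subsection \<open>Coefficients of images of chi_I\<close>

text \<open>The generators w_i = (0, i) and w'_i = (1, i) of B \<otimes> \<and>W \<otimes> \<and>W; every word w_I^e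
  is spelled in them.\<close>
definition gens2 :: "(nat \<times> 'i) set" where
  "gens2 = {p. fst p \<le> 1}"

lemma word_in_gens2: "e \<in> Eps (length I) \<Longrightarrow> set (zip e I) \<subseteq> gens2"
  by (auto simp: Eps_def gens2_def dest!: set_zip_leftD)

lemma chi_img_zero:
  "(\<And>e. e \<in> Eps (length I) \<Longrightarrow> ext_img \<phi> (zip e I) T = 0) \<Longrightarrow> chi_img \<phi> a I T = 0"
  by (simp add: chi_img_def wordI_def)

lemma chi_img_uncovered:
  "t \<in> T \<Longrightarrow> (\<And>g. t \<notin> set (\<phi> g)) \<Longrightarrow> chi_img \<phi> a I T = 0"
  by (rule chi_img_zero) (rule ext_img_uncovered)

text \<open>Let i_s = i_{s+1} = i.  Each word w_I^e either repeats a letter adjacently (e_s = e_{s+1})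
  or contains both w_i and w'_i; so the image of chi_I vanishes at e_T as soon as the image of
  one of w_i, w'_i has no summand in T.\<close>
lemma chi_img_pair_avoids:
  assumes s: "Suc s < length I" "I ! s = i" "I ! Suc s = i"
    and v: "v \<in> {0, 1}" and avoid: "\<And>y. y \<in> set (\<phi> (v, i)) \<Longrightarrow> y \<notin> T"
  shows "chi_img \<phi> a I T = 0"
proof (rule chi_img_zero)
  fix e assume e: "e \<in> Eps (length I)"
  then have len: "length e = length I" and bits: "e ! s \<in> {0, 1}" "e ! Suc s \<in> {0, 1}"
    using s(1) by (auto simp: Eps_def subset_iff)
  have split: "zip e I = take s (zip e I) @ (e ! s, i) # (e ! Suc s, i) # drop (Suc (Suc s)) (zip e I)"
  proof -
    have bound: "Suc s < length (zip e I)" using s(1) len by simp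
    have "zip e I ! s = (e ! s, i)" "zip e I ! Suc s = (e ! Suc s, i)" using s len by auto
    then show ?thesis
      using id_take_nth_drop[OF Suc_lessD[OF bound]] Cons_nth_drop_Suc[OF bound] by metis
  qed
  show "ext_img \<phi> (zip e I) T = 0"
  proof (cases "e ! s = e ! Suc s")
    case True
    then show ?thesis by (subst split) (simp only: ext_img_repeat)
  next
    case False
    then have "(v, i) \<in> set (zip e I)" using bits v by (subst split) auto
    then show ?thesis using avoid by (rule ext_img_letter_avoids)
  qed
qed

lemma chi_img_selects:
  assumes inj: "inj_on \<rho> gens2" and S: "S \<subseteq> gens2" "distinct L0" "set L0 = S"
    and sel: "\<And>x. x \<in> gens2 \<Longrightarrow> selects \<phi> \<rho> (\<rho> ` S) x"
  shows "chi_img \<phi> a I (\<rho> ` S) = of_int (relabel_sign \<rho> L0) * chi a I S"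
proof -
  have "a e * of_int (ext_img \<phi> (zip e I) (\<rho> ` S)) =
        of_int (relabel_sign \<rho> L0) * (a e * of_int (mon (zip e I) S))"
    if e: "e \<in> Eps (length I)" for e
  proof -
    have "ext_img \<phi> (zip e I) (\<rho> ` S) = mon (map \<rho> (zip e I)) (\<rho> ` S)"
      using sel word_in_gens2[OF e] by (intro ext_img_selects) blast
    also have "\<dots> = relabel_sign \<rho> L0 * mon (zip e I) S"
      by (rule mon_relabel[OF inj S(1) word_in_gens2[OF e] S(2,3)])
    finally show ?thesis by (metis mult.assoc mult_of_int_commute of_int_mult)
  qed
  then show ?thesis
    unfolding chi_img_def chi_def wordI_def sum_distrib_left by (rule sum.cong[OF refl])
qed


subsection \<open>The support of a nonzero coefficient of chi_I\<close>

lemma chi_support: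
  assumes e: "e \<in> Eps (length I)" and m: "mon (zip e I) S \<noteq> 0"
    and r: "length I \<ge> 3" and s: "Suc s < length I" "I ! s = i" "I ! Suc s = i"
  shows "S \<subseteq> gens2" "(0, i) \<in> S" "(1, i) \<in> S" "\<exists>c j. c \<le> 1 \<and> j \<noteq> i \<and> (c, j) \<in> S"
proof -
  let ?L = "zip e I"
  have d: "distinct ?L" and set_L: "set ?L = S" using m by (auto simp: mon_def split: if_splits)
  have len: "length ?L = length I" and bits: "set e \<subseteq> {0, 1}" using e by (auto simp: Eps_def)
  show "S \<subseteq> gens2" using word_in_gens2[OF e] set_L by simp
  have nth: "?L ! k = (e ! k, I ! k)" "?L ! k \<in> S" "e ! k \<in> {0, 1}" if "k < length I" for k
  proof -
    show "?L ! k = (e ! k, I ! k)" using that len by simp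
    show "?L ! k \<in> S" using that len set_L by (metis nth_mem)
    have "e ! k \<in> set e" using that len by simp
    then show "e ! k \<in> {0, 1}" using bits by blast
  qed
  have "?L ! s \<noteq> ?L ! Suc s" using nth_eq_iff_index_eq[OF d, of s "Suc s"] s(1) len by simp
  then have pair: "e ! s \<noteq> e ! Suc s" using nth(1)[of s] nth(1)[of "Suc s"] s by simp
  then show "(0, i) \<in> S" "(1, i) \<in> S"
    using nth[of s] nth[of "Suc s"] s by (auto simp: insert_commute)
  obtain k where k: "k < length I" "k \<noteq> s" "k \<noteq> Suc s"
  proof (cases s)
    case 0 then show ?thesis using r by (intro that[of 2]) auto
  next
    case (Suc n) then show ?thesis using s(1) by (intro that[of 0]) auto
  qed
  have "?L ! k \<noteq> ?L ! s" "?L ! k \<noteq> ?L ! Suc s"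
    using nth_eq_iff_index_eq[OF d, of k s] nth_eq_iff_index_eq[OF d, of k "Suc s"] k s(1) len by auto
  then have "I ! k \<noteq> i" using pair nth(1,3)[of k] nth(1,3)[of s] nth(1,3)[of "Suc s"] k s by auto
  moreover have "e ! k \<le> 1" "(e ! k, I ! k) \<in> S" using nth[of k] k(1) by auto
  ultimately show "\<exists>c j. c \<le> 1 \<and> j \<noteq> i \<and> (c, j) \<in> S" by blast
qed


subsection \<open>The two cases\<close>

definition prime_shift :: "'i \<Rightarrow> nat \<times> 'i \<Rightarrow> nat \<times> 'i" where
  "prime_shift i p = (if fst p = 1 \<and> snd p \<noteq> i then (2, snd p) else p)"

definition unprimed_shift :: "'i \<Rightarrow> nat \<times> 'i \<Rightarrow> nat \<times> 'i" where
  "unprimed_shift i p = (if fst p = 0 then (if snd p = i then (1, i) else p) else (2, snd p))"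

lemma inj_on_prime_shift: "inj_on (prime_shift i) gens2"
  by (auto simp: inj_on_def prime_shift_def gens2_def)

lemma inj_on_unprimed_shift: "inj_on (unprimed_shift i) gens2"
  by (auto simp: inj_on_def unprimed_shift_def gens2_def split: if_splits)

text \<open>gamma(w_k) = w_k and gamma(w'_k) = w'_k + w''_k: if T contains no w''_i and no w'_k
  with k \<noteq> i, then gamma selects prime_shift i on all two-copy generators.\<close>
lemma prime_shift_selects_gamma:
  assumes "(2, i) \<notin> T" "\<And>k. (1, k) \<in> T \<Longrightarrow> k = i" "x \<in> gens2"
  shows "selects gamma_g (prime_shift i) T x"
  using assms by (cases x) (auto simp: selects_def gamma_g_def prime_shift_def gens2_def le_Suc_eq)

text \<open>beta(w_k) = w_k + w'_k and beta(w'_k) = w''_k: if T contains no w_i and no w'_k with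
  k \<noteq> i, then beta selects unprimed_shift i on all two-copy generators.\<close>
lemma unprimed_shift_selects_beta:
  assumes "(0, i) \<notin> T" "\<And>k. (1, k) \<in> T \<Longrightarrow> k = i" "x \<in> gens2"
  shows "selects beta_g (unprimed_shift i) T x"
  using assms by (cases x) (auto simp: selects_def beta_g_def unprimed_shift_def gens2_def le_Suc_eq)

lemma of_relabel_sign_cancel:
  "of_int (relabel_sign f L) * x = 0 \<Longrightarrow> x = (0::'b::ring_1)"
  by (metis mult.assoc mult_1 mult_zero_right of_int_1 of_int_mult relabel_sign_square)

text \<open>Case S \<ni> w_i, w'_i, w'_j (j \<noteq> i): at T = prime_shift i ` S \<ni> w_i, w'_i, w''_j the images
  under alpha (no w''), delta (no w) and beta (beta(w'_i) = w''_i \<notin> T) vanish, while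
  gamma(w'_k) = w'_k + w''_k has exactly the summand prime_shift i (w'_k) in T.\<close>
lemma chi_zero_primed_case:
  fixes a :: "nat list \<Rightarrow> 'b::ring_1"
  assumes hyp: "\<And>T. chi_img alpha_g a I T + chi_img beta_g a I T =
                     chi_img gamma_g a I T + chi_img delta_g a I T"
    and s: "Suc s < length I" "I ! s = i" "I ! Suc s = i"
    and S: "S \<subseteq> gens2" "distinct L0" "set L0 = S" "(0, i) \<in> S" "(1, j) \<in> S" "j \<noteq> i"
  shows "chi a I S = 0"
proof -
  let ?\<rho> = "prime_shift i"
  let ?T = "?\<rho> ` S"
  have T: "(0, i) \<in> ?T" "(2, j) \<in> ?T" "(2, i) \<notin> ?T" "\<And>k. (1, k) \<in> ?T \<Longrightarrow> k = i"
    using S by (force simp: prime_shift_def gens2_def split: if_splits)+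
  have "chi_img alpha_g a I ?T = 0"
    by (rule chi_img_uncovered[OF T(2)]) (auto simp: alpha_g_def split: prod.splits)
  moreover have "chi_img delta_g a I ?T = 0"
    by (rule chi_img_uncovered[OF T(1)]) (auto simp: delta_g_def split: prod.splits)
  moreover have "chi_img beta_g a I ?T = 0"
    by (rule chi_img_pair_avoids[OF s, of 1]) (use T(3) in \<open>auto simp: beta_g_def\<close>)
  moreover have "chi_img gamma_g a I ?T = of_int (relabel_sign ?\<rho> L0) * chi a I S"
    by (rule chi_img_selects[OF inj_on_prime_shift S(1-3) prime_shift_selects_gamma[OF T(3,4)]])
  ultimately show ?thesis using hyp[of ?T] by (simp add: of_relabel_sign_cancel)
qed

text \<open>Case S \<ni> w_i, w'_i, w_j (j \<noteq> i): at T = unprimed_shift i ` S \<ni> w'_i, w''_i, w_j the images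
  under alpha (no w''), delta (no w) and gamma (gamma(w_i) = w_i \<notin> T) vanish, while
  beta(w_k) = w_k + w'_k has exactly the summand unprimed_shift i (w_k) in T.\<close>
lemma chi_zero_unprimed_case:
  fixes a :: "nat list \<Rightarrow> 'b::ring_1"
  assumes hyp: "\<And>T. chi_img alpha_g a I T + chi_img beta_g a I T =
                     chi_img gamma_g a I T + chi_img delta_g a I T"
    and s: "Suc s < length I" "I ! s = i" "I ! Suc s = i"
    and S: "S \<subseteq> gens2" "distinct L0" "set L0 = S" "(0, i) \<in> S" "(1, i) \<in> S" "(0, j) \<in> S" "j \<noteq> i"
  shows "chi a I S = 0"
proof -
  let ?\<rho> = "unprimed_shift i"
  let ?T = "?\<rho> ` S"
  have T: "(0, j) \<in> ?T" "(2, i) \<in> ?T" "(0, i) \<notin> ?T" "\<And>k. (1, k) \<in> ?T \<Longrightarrow> k = i"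
    using S by (force simp: unprimed_shift_def gens2_def split: if_splits)+
  have "chi_img alpha_g a I ?T = 0"
    by (rule chi_img_uncovered[OF T(2)]) (auto simp: alpha_g_def split: prod.splits)
  moreover have "chi_img delta_g a I ?T = 0"
    by (rule chi_img_uncovered[OF T(1)]) (auto simp: delta_g_def split: prod.splits)
  moreover have "chi_img gamma_g a I ?T = 0"
    by (rule chi_img_pair_avoids[OF s, of 0]) (use T(3) in \<open>auto simp: gamma_g_def\<close>)
  moreover have "chi_img beta_g a I ?T = of_int (relabel_sign ?\<rho> L0) * chi a I S"
    by (rule chi_img_selects[OF inj_on_unprimed_shift S(1-3) unprimed_shift_selects_beta[OF T(3,4)]])
  ultimately show ?thesis using hyp[of ?T] by (simp add: of_relabel_sign_cancel)
qed


text \<open>If some word w_I^e has support S, chi_support provides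
  the generators w_i, w'_i and (c, j) in S, and the two case lemmas conclude.\<close>

theorem mainTheorem9:
  fixes B :: "int \<Rightarrow> 'b::ring_1 set"
    and I :: "'i::linorder list"
    and a :: "nat list \<Rightarrow> 'b"
  assumes "graded_comm_rat_algebra B"
    and "length I \<ge> 3"
    and "sorted I"
    and "\<exists>s. Suc s < length I \<and> I ! s = I ! Suc s"
    and "\<forall>S. chi_img alpha_g a I S + chi_img beta_g a I S
              = chi_img gamma_g a I S + chi_img delta_g a I S"
  shows "\<forall>S. chi a I S = 0"
proof
  fix S :: "(nat \<times> 'i) set"
  obtain s where s: "Suc s < length I" "I ! s = I ! s" "I ! Suc s = I ! s" using assms(4) by auto
  have hyp: "\<And>T. chi_img alpha_g a I T + chi_img beta_g a I T =
                  chi_img gamma_g a I T + chi_img delta_g a I T" using assms(5) by blast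
  show "chi a I S = 0"
  proof (cases "\<exists>e\<in>Eps (length I). mon (zip e I) S \<noteq> 0")
    case False
    then show ?thesis by (simp add: chi_def wordI_def)
  next
    case True
    then obtain e where e: "e \<in> Eps (length I)" "mon (zip e I) S \<noteq> 0" by blast
    then have L: "distinct (zip e I)" "set (zip e I) = S" by (auto simp: mon_def split: if_splits)
    note support = chi_support[OF e assms(2) s]
    then obtain c j where c: "c \<le> 1" "j \<noteq> I ! s" "(c, j) \<in> S" by blast
    show ?thesis
    proof (cases "c = 0")
      case True
      then show ?thesis using chi_zero_unprimed_case[OF hyp s support(1) L support(2,3)] c by simp
    next
      case False
      then have "(1, j) \<in> S" using c by (metis le_neq_implies_less less_one)
      then show ?thesis using chi_zero_primed_case[OF hyp s support(1) L support(2)] c by simp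
    qed
  qed
qed

end
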